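(* Let $(H,+,\circ)$ be a commutative multiplicative hyperring with identity and let $P$ be a proper strong $\mathcal{C}$-hyperideal of $H$. Then $P$ is an sdf-absorbing hyperideal of $H$ if and only if the following holds: whenever $0\neq x,y\in H\setminus P$ satisfy $x\circ y\subseteq P$, there are no $0\neq a,b\in H$ with $a-b=x$ and $a+b=y$.
   Context: A commutative multiplicative hyperring $(H,+,\circ)$ consists of an abelian group $(H,+)$ and an associative, commutative hyperoperation $\circ: H\times H\to P^*(H)$ with $x\circ(y+z)\subseteq x\circ y+x\circ z$ and $x\circ(-y)=-(x\circ y)=(-x)\circ y$. For subsets $A,B$, $A\circ B=\bigcup_{a\in A,b\in B}a\circ b$, $A\pm B=\{a\pm b\}$; $x^2=x\circ x$. Identity: $x\in x\circ 1$ for all $x$. A hyperideal is a nonempty $P$ with $x-y\in P$ and $r\circ x\subseteq P$ for $x,y\in P$, $r\in H$. Let $\mathcal{C}=\{c_1\circ\cdots\circ c_n: c_i\in H,n\in\mathbb{N}\}$ and $\mathfrak{C}=\{\sum_{i=1}^n C_i: C_i\in\mathcal{C}\}$; $P$ is a strong $\mathcal{C}$-hyperideal if for every $D\in\mathfrak{C}$, $D\cap P\neq\varnothing$ implies $D\subseteq P$. A proper hyperideal $P$ is sdf-absorbing if whenever $0\neq x,y\in H$ and $x^2-y^2\subseteq P$, then $x-y\in P$ or $x+y\in P$. *)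

theory Defs
  imports Main
begin

text \<open>A hyperoperation on the carrier type 'a (whose additive structure (H,+) is the
abelian group given by the type class ab_group_add) is a map 'a => 'a => 'a set.\<close>

definition hset_mult :: "('a \<Rightarrow> 'a \<Rightarrow> 'a set) \<Rightarrow> 'a set \<Rightarrow> 'a set \<Rightarrow> 'a set" where
  "hset_mult m A B = (\<Union>a\<in>A. \<Union>b\<in>B. m a b)"

definition set_plus_h :: "'a::ab_group_add set \<Rightarrow> 'a set \<Rightarrow> 'a set" where
  "set_plus_h A B = {a + b | a b. a \<in> A \<and> b \<in> B}"

definition set_minus_h :: "'a::ab_group_add set \<Rightarrow> 'a set \<Rightarrow> 'a set" where
  "set_minus_h A B = {a - b | a b. a \<in> A \<and> b \<in> B}"

definition comm_mult_hyperring :: "('a::ab_group_add \<Rightarrow> 'a \<Rightarrow> 'a set) \<Rightarrow> bool" where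
  "comm_mult_hyperring m \<longleftrightarrow>
     (\<forall>x y. m x y \<noteq> {}) \<and>
     (\<forall>x y z. hset_mult m (m x y) {z} = hset_mult m {x} (m y z)) \<and>
     (\<forall>x y. m x y = m y x) \<and>
     (\<forall>x y z. m x (y + z) \<subseteq> set_plus_h (m x y) (m x z)) \<and>
     (\<forall>x y. m x (- y) = uminus ` (m x y) \<and> m (- x) y = uminus ` (m x y))"

definition hr_identity :: "('a \<Rightarrow> 'a \<Rightarrow> 'a set) \<Rightarrow> 'a \<Rightarrow> bool" where
  "hr_identity m e \<longleftrightarrow> (\<forall>x. x \<in> m x e)"

definition hyperideal :: "('a::ab_group_add \<Rightarrow> 'a \<Rightarrow> 'a set) \<Rightarrow> 'a set \<Rightarrow> bool" where
  "hyperideal m P \<longleftrightarrow> P \<noteq> {} \<and> (\<forall>x\<in>P. \<forall>y\<in>P. x - y \<in> P) \<and> (\<forall>r x. x \<in> P \<longrightarrow> m r x \<subseteq> P)"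

definition proper_hyperideal :: "('a::ab_group_add \<Rightarrow> 'a \<Rightarrow> 'a set) \<Rightarrow> 'a set \<Rightarrow> bool" where
  "proper_hyperideal m P \<longleftrightarrow> hyperideal m P \<and> P \<noteq> UNIV"

fun hprod :: "('a \<Rightarrow> 'a \<Rightarrow> 'a set) \<Rightarrow> 'a list \<Rightarrow> 'a set" where
  "hprod m [] = {}"
| "hprod m [c] = {c}"
| "hprod m (c # cs) = hset_mult m {c} (hprod m cs)"

definition classC :: "('a \<Rightarrow> 'a \<Rightarrow> 'a set) \<Rightarrow> 'a set set" where
  "classC m = {hprod m cs | cs. cs \<noteq> []}"

fun sum_sets :: "'a::ab_group_add set list \<Rightarrow> 'a set" where
  "sum_sets [] = {0}"
| "sum_sets [A] = A"
| "sum_sets (A # As) = set_plus_h A (sum_sets As)"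

definition classFC :: "('a::ab_group_add \<Rightarrow> 'a \<Rightarrow> 'a set) \<Rightarrow> 'a set set" where
  "classFC m = {sum_sets Cs | Cs. Cs \<noteq> [] \<and> set Cs \<subseteq> classC m}"

definition strong_C_hyperideal :: "('a::ab_group_add \<Rightarrow> 'a \<Rightarrow> 'a set) \<Rightarrow> 'a set \<Rightarrow> bool" where
  "strong_C_hyperideal m P \<longleftrightarrow> hyperideal m P \<and>
     (\<forall>D\<in>classFC m. D \<inter> P \<noteq> {} \<longrightarrow> D \<subseteq> P)"

definition sdf_absorbing :: "('a::ab_group_add \<Rightarrow> 'a \<Rightarrow> 'a set) \<Rightarrow> 'a set \<Rightarrow> bool" where
  "sdf_absorbing m P \<longleftrightarrow> proper_hyperideal m P \<and>
     (\<forall>x y. x \<noteq> 0 \<longrightarrow> y \<noteq> 0 \<longrightarrow> set_minus_h (m x x) (m y y) \<subseteq> P \<longrightarrow>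
        x - y \<in> P \<or> x + y \<in> P)"

end

theory Submission
  imports Defs
begin

text \<open>Expanding formally, every element of (a - b)\<circ>(a + b) and every u - v with u \<in> a\<circ>a,
  v \<in> b\<circ>b lies in the single set a\<circ>a + a\<circ>(-b) + b\<circ>a + (-b)\<circ>b of \<frak>C (for the
  latter choose w \<in> a\<circ>b, so that -w \<in> a\<circ>(-b) cancels w \<in> b\<circ>a).  A strong \<C>-hyperideal
  containing one element of this set contains all of it, so (a - b)\<circ>(a + b) \<subseteq> P iff
  a\<circ>a - b\<circ>b \<subseteq> P.  With x = a - b and y = a + b both directions of the theorem are then
  immediate.\<close>

lemma comm_mult_hyperringD:
  assumes "comm_mult_hyperring m"
  shows hmult_nonempty: "m x y \<noteq> {}"
    and hmult_commute: "m x y = m y x"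
    and hmult_distrib: "m x (y + z) \<subseteq> set_plus_h (m x y) (m x z)"
    and hmult_minus_right: "m x (- y) = uminus ` m x y"
    and hmult_minus_left: "m (- x) y = uminus ` m x y"
  using assms unfolding comm_mult_hyperring_def by auto

definition diff_sum_expansion :: "('a::ab_group_add \<Rightarrow> 'a \<Rightarrow> 'a set) \<Rightarrow> 'a \<Rightarrow> 'a \<Rightarrow> 'a set" where
  "diff_sum_expansion m a b = sum_sets [m a a, m a (-b), m b a, m (-b) b]"

lemma hprod_pair: "hprod m [a, b] = m a b"
  by (simp add: hset_mult_def)

lemma hmult_in_classC: "m a b \<in> classC m"
  unfolding classC_def by (metis (mono_tags, lifting) hprod_pair list.distinct(1) mem_Collect_eq)

lemma diff_sum_expansion_in_classFC: "diff_sum_expansion m a b \<in> classFC m"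
  unfolding classFC_def diff_sum_expansion_def using hmult_in_classC
  by (metis (mono_tags, lifting) empty_subsetI insert_subset list.distinct(1) list.set mem_Collect_eq)

lemma mem_diff_sum_expansionI:
  assumes "u \<in> m a a" "p \<in> m a (-b)" "q \<in> m b a" "r \<in> m (-b) b"
  shows "u + (p + (q + r)) \<in> diff_sum_expansion m a b"
  using assms unfolding diff_sum_expansion_def by (simp add: set_plus_h_def) blast

lemma hmult_diff_sum_subset_expansion:
  assumes hr: "comm_mult_hyperring m"
  shows "m (a - b) (a + b) \<subseteq> diff_sum_expansion m a b"
proof
  fix e assume e: "e \<in> m (a - b) (a + b)"
  note distrib = hmult_distrib[OF hr]
  have swap: "m (a - b) x = m x (a + - b)" for x
    using hmult_commute[OF hr, of "a - b" x] by (simp only: diff_conv_add_uminus)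
  from e distrib[of "a - b" a b] obtain p q where "e = p + q" "p \<in> m a (a + - b)" "q \<in> m b (a + - b)"
    unfolding set_plus_h_def swap by blast
  moreover from \<open>p \<in> m a (a + - b)\<close> distrib[of a a "- b"]
  obtain u1 u2 where "p = u1 + u2" "u1 \<in> m a a" "u2 \<in> m a (-b)"
    unfolding set_plus_h_def by blast
  moreover from \<open>q \<in> m b (a + - b)\<close> distrib[of b a "- b"]
  obtain u3 u4 where "q = u3 + u4" "u3 \<in> m b a" "u4 \<in> m b (-b)"
    unfolding set_plus_h_def by blast
  moreover have "m b (-b) = m (-b) b"
    using hmult_minus_left[OF hr] hmult_minus_right[OF hr] by simp
  ultimately show "e \<in> diff_sum_expansion m a b"
    using mem_diff_sum_expansionI[of u1 m a u2 b u3 u4] by (simp only: add.assoc)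
qed

lemma square_diff_subset_expansion:
  assumes hr: "comm_mult_hyperring m"
  shows "set_minus_h (m a a) (m b b) \<subseteq> diff_sum_expansion m a b"
proof
  fix d assume "d \<in> set_minus_h (m a a) (m b b)"
  then obtain u v where "d = u - v" "u \<in> m a a" "v \<in> m b b"
    unfolding set_minus_h_def by blast
  moreover obtain w where "w \<in> m a b"
    using hmult_nonempty[OF hr] by blast
  ultimately have "u + (- w + (w + - v)) \<in> diff_sum_expansion m a b"
    by (intro mem_diff_sum_expansionI)
      (simp_all add: hmult_minus_left[OF hr] hmult_minus_right[OF hr] hmult_commute[OF hr, of b a])
  then show "d \<in> diff_sum_expansion m a b"
    using \<open>d = u - v\<close> by simp
qed

lemma strong_C_hyperideal_subset_iff:
  assumes "strong_C_hyperideal m P" and "D \<in> classFC m"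
    and "S \<subseteq> D" "S \<noteq> {}" "T \<subseteq> D" "T \<noteq> {}"
  shows "S \<subseteq> P \<longleftrightarrow> T \<subseteq> P"
proof -
  have "D \<subseteq> P" if "U \<subseteq> D" "U \<noteq> {}" "U \<subseteq> P" for U
    using assms(1,2) that unfolding strong_C_hyperideal_def by blast
  with assms(3-6) show ?thesis by blast
qed

lemma hmult_diff_sum_subset_iff_square_diff_subset:
  assumes hr: "comm_mult_hyperring m" and "strong_C_hyperideal m P"
  shows "m (a - b) (a + b) \<subseteq> P \<longleftrightarrow> set_minus_h (m a a) (m b b) \<subseteq> P"
proof (rule strong_C_hyperideal_subset_iff[OF assms(2) diff_sum_expansion_in_classFC])
  show "m (a - b) (a + b) \<subseteq> diff_sum_expansion m a b"
    by (rule hmult_diff_sum_subset_expansion[OF hr])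
  show "set_minus_h (m a a) (m b b) \<subseteq> diff_sum_expansion m a b"
    by (rule square_diff_subset_expansion[OF hr])
  show "m (a - b) (a + b) \<noteq> {}"
    by (rule hmult_nonempty[OF hr])
  show "set_minus_h (m a a) (m b b) \<noteq> {}"
    using hmult_nonempty[OF hr, of a a] hmult_nonempty[OF hr, of b b]
    unfolding set_minus_h_def by blast
qed

lemma zero_mem_hyperideal: "hyperideal m P \<Longrightarrow> 0 \<in> P"
  unfolding hyperideal_def by (metis all_not_in_conv diff_self)

theorem mainTheorem4:
  fixes m :: "'a::ab_group_add \<Rightarrow> 'a \<Rightarrow> 'a set" and one :: 'a and P :: "'a set"
  assumes "comm_mult_hyperring m"
    and "hr_identity m one"
    and "proper_hyperideal m P"
    and "strong_C_hyperideal m P"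
  shows "sdf_absorbing m P \<longleftrightarrow>
    (\<forall>x y. x \<noteq> 0 \<longrightarrow> y \<noteq> 0 \<longrightarrow> x \<notin> P \<longrightarrow> y \<notin> P \<longrightarrow> m x y \<subseteq> P \<longrightarrow>
       \<not> (\<exists>a b. a \<noteq> 0 \<and> b \<noteq> 0 \<and> a - b = x \<and> a + b = y))"
proof -
  note key = hmult_diff_sum_subset_iff_square_diff_subset[OF assms(1,4)]
  have "0 \<in> P"
    using assms(3) zero_mem_hyperideal unfolding proper_hyperideal_def by blast
  show ?thesis
    unfolding sdf_absorbing_def
  proof (intro iffI allI impI notI conjI assms(3))
    fix x y
    assume "proper_hyperideal m P \<and> (\<forall>x y. x \<noteq> 0 \<longrightarrow> y \<noteq> 0 \<longrightarrow>
              set_minus_h (m x x) (m y y) \<subseteq> P \<longrightarrow> x - y \<in> P \<or> x + y \<in> P)"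
      and "x \<notin> P" "y \<notin> P" "m x y \<subseteq> P"
      and "\<exists>a b. a \<noteq> 0 \<and> b \<noteq> 0 \<and> a - b = x \<and> a + b = y"
    then show False
      using key by blast
  next
    fix x y
    assume absorbs: "\<forall>x y. x \<noteq> 0 \<longrightarrow> y \<noteq> 0 \<longrightarrow> x \<notin> P \<longrightarrow> y \<notin> P \<longrightarrow> m x y \<subseteq> P \<longrightarrow>
              \<not> (\<exists>a b. a \<noteq> 0 \<and> b \<noteq> 0 \<and> a - b = x \<and> a + b = y)"
      and "x \<noteq> 0" "y \<noteq> 0" "set_minus_h (m x x) (m y y) \<subseteq> P"
    then show "x - y \<in> P \<or> x + y \<in> P"
      using absorbs[rule_format, of "x - y" "x + y"] key \<open>0 \<in> P\<close> by fastforce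
  qed
qed

end
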